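(* Let $\mathbb{F}\subseteq\mathbb{C}$ be a subfield closed under complex conjugation, $m\ge2$, $N\ge1$, and let $\zeta_1,\dots,\zeta_{m-1}\in\mathcal{P}_N^-[\mathbb{F}]$. Let $\mathbf{u}(z)=(u_1(z),\dots,u_{m-1}(z),\widetilde{u_m}(z))^T$ and $\mathbf{v}(z)=(v_1(z),\dots,v_{m-1}(z),\widetilde{v_m}(z))^T$, with all $u_i,v_i\in\mathcal{P}_N^+[\mathbb{F}]$, be two (possibly equal) solutions of the system $(\mathcal{S})$. Then $$\sum_{i=1}^{m-1}u_i(z)\widetilde{v_i}(z)+\widetilde{u_m}(z)v_m(z)$$ is constant on $\mathbb{C}\setminus\{0\}$.
   Context: For a Laurent polynomial $p(z)=\sum_k c_kz^k$ write $\widetilde{p}(z)=\sum_k\overline{c_k}z^{-k}$. $\mathcal{P}_N^+[\mathbb{F}]=\{\sum_{k=0}^Nc_kz^k: c_k\in\mathbb{F}\}$, $\mathcal{P}_N^-[\mathbb{F}]=\{\sum_{k=1}^Nc_kz^{-k}: c_k\in\mathbb{F}\}$. Let $\mathcal{P}^+$ denote the set of polynomials in $z$ (Laurent polynomials with no negative powers). The system $(\mathcal{S})$ in unknowns $x_1,\dots,x_m$ is $$\zeta_i(z)x_m(z)-\widetilde{x_i}(z)\in\mathcal{P}^+\ (i=1,\dots,m-1),\qquad \sum_{i=1}^{m-1}\zeta_i(z)x_i(z)+\widetilde{x_m}(z)\in\mathcal{P}^+.$$ A vector $(u_1,\dots,u_{m-1},\widetilde{u_m})^T$ with $u_i\in\mathcal{P}_N^+[\mathbb{F}]$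 is called a solution of $(\mathcal{S})$ if all these conditions hold with $x_i=u_i$, $i=1,\dots,m$. *)

theory Defs
  imports Complex_Main
begin

text \<open>Laurent polynomials with complex coefficients, represented by their coefficient
  function (coefficient of z^k at index k); genuine Laurent polynomials have finite support.\<close>

type_synonym lpoly = "int \<Rightarrow> complex"

definition lsupp :: "lpoly \<Rightarrow> int set" where
  "lsupp p = {k. p k \<noteq> 0}"

definition is_lpoly :: "lpoly \<Rightarrow> bool" where
  "is_lpoly p \<longleftrightarrow> finite (lsupp p)"

definition lmult :: "lpoly \<Rightarrow> lpoly \<Rightarrow> lpoly" where
  "lmult p q = (\<lambda>n. \<Sum>k\<in>lsupp p. p k * q (n - k))"

definition ltilde :: "lpoly \<Rightarrow> lpoly" where
  "ltilde p = (\<lambda>k. cnj (p (- k)))"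

definition leval :: "lpoly \<Rightarrow> complex \<Rightarrow> complex" where
  "leval p z = (\<Sum>k\<in>lsupp p. p k * z powi k)"

definition in_Pplus :: "lpoly \<Rightarrow> bool" where
  "in_Pplus p \<longleftrightarrow> (\<forall>k<0. p k = 0)"

definition PplusN :: "complex set \<Rightarrow> nat \<Rightarrow> lpoly set" where
  "PplusN F N = {p. (\<forall>k. p k \<in> F) \<and> (\<forall>k. (k < 0 \<or> k > int N) \<longrightarrow> p k = 0)}"

definition PminusN :: "complex set \<Rightarrow> nat \<Rightarrow> lpoly set" where
  "PminusN F N = {p. (\<forall>k. p k \<in> F) \<and> (\<forall>k. (k \<ge> 0 \<or> k < - int N) \<longrightarrow> p k = 0)}"

definition conj_closed_subfield :: "complex set \<Rightarrow> bool" where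
  "conj_closed_subfield F \<longleftrightarrow>
     0 \<in> F \<and> 1 \<in> F \<and>
     (\<forall>a\<in>F. \<forall>b\<in>F. a + b \<in> F \<and> a * b \<in> F) \<and>
     (\<forall>a\<in>F. - a \<in> F) \<and> (\<forall>a\<in>F. a \<noteq> 0 \<longrightarrow> inverse a \<in> F) \<and>
     (\<forall>a\<in>F. cnj a \<in> F)"

text \<open>The vector (u_1,...,u_{m-1}, tilde u_m) with u_i in P_N^+[F] is a solution of (S)
  (with coefficients zeta_1..zeta_{m-1}); u is indexed by 1..m.\<close>
definition is_solution_S ::
    "complex set \<Rightarrow> nat \<Rightarrow> nat \<Rightarrow> (nat \<Rightarrow> lpoly) \<Rightarrow> (nat \<Rightarrow> lpoly) \<Rightarrow> bool" where
  "is_solution_S F N m \<zeta> u \<longleftrightarrow>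
     (\<forall>i\<in>{1..m}. u i \<in> PplusN F N) \<and>
     (\<forall>i\<in>{1..m-1}. in_Pplus (\<lambda>k. lmult (\<zeta> i) (u m) k - ltilde (u i) k)) \<and>
     in_Pplus (\<lambda>k. (\<Sum>i=1..m-1. lmult (\<zeta> i) (u i) k) + ltilde (u m) k)"

end

theory Submission imports Defs begin

text \<open>Write \<open>E\<^sub>u\<^sub>v(z)\<close> for the sum in question. With \<open>Q = \<Sum> \<zeta>\<^sub>i u\<^sub>i + \<tilde>u\<^sub>m\<close> and
  \<open>P\<^sub>i = \<zeta>\<^sub>i v\<^sub>m - \<tilde>v\<^sub>i\<close>, both in \<open>\<P>\<^sup>+\<close> by \<open>(\<S>)\<close>, one has \<open>E\<^sub>u\<^sub>v = Q v\<^sub>m - \<Sum> u\<^sub>i P\<^sub>i\<close>, so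
  \<open>E\<^sub>u\<^sub>v\<close> has no negative powers. Exchanging the two solutions, \<open>E\<^sub>v\<^sub>u = \<tilde>E\<^sub>u\<^sub>v\<close> has none
  either, so \<open>E\<^sub>u\<^sub>v\<close> has no positive powers and is constant. Equalities of Laurent polynomials
  are checked through their values on \<open>\<complex> - {0}\<close>.\<close>

lemma leval_eq_sum_superset:
  assumes "finite A" "lsupp p \<subseteq> A"
  shows "leval p z = (\<Sum>k\<in>A. p k * z powi k)"
  unfolding leval_def
  by (rule sum.mono_neutral_left) (use assms in \<open>auto simp: lsupp_def\<close>)

lemma lsupp_lmult_subset:
  "lsupp (lmult p q) \<subseteq> (\<lambda>(a, b). a + b) ` (lsupp p \<times> lsupp q)"
proof
  fix n assume "n \<in> lsupp (lmult p q)"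
  then have "(\<Sum>k\<in>lsupp p. p k * q (n - k)) \<noteq> 0" by (simp add: lsupp_def lmult_def)
  then obtain k where "k \<in> lsupp p" "p k * q (n - k) \<noteq> 0" by (meson sum.neutral)
  then have "k \<in> lsupp p" "n - k \<in> lsupp q" by (auto simp: lsupp_def)
  then show "n \<in> (\<lambda>(a, b). a + b) ` (lsupp p \<times> lsupp q)"
    by (intro image_eqI[where x="(k, n - k)"]) auto
qed

lemma lsupp_ltilde: "lsupp (ltilde p) = uminus ` lsupp p"
  by (auto simp: lsupp_def ltilde_def image_iff intro!: exI[where x="- _"])

lemma ltilde_ltilde [simp]: "ltilde (ltilde p) = p"
  by (simp add: ltilde_def)

lemma is_lpoly_lmult: "is_lpoly p \<Longrightarrow> is_lpoly q \<Longrightarrow> is_lpoly (lmult p q)"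
  unfolding is_lpoly_def using lsupp_lmult_subset by (meson finite_SigmaI finite_imageI finite_subset)

lemma is_lpoly_ltilde: "is_lpoly p \<Longrightarrow> is_lpoly (ltilde p)"
  by (simp add: is_lpoly_def lsupp_ltilde)

lemma is_lpoly_add: "is_lpoly p \<Longrightarrow> is_lpoly q \<Longrightarrow> is_lpoly (\<lambda>k. p k + q k)"
  unfolding is_lpoly_def lsupp_def
  by (rule finite_subset[of _ "{k. p k \<noteq> 0} \<union> {k. q k \<noteq> 0}"]) auto

lemma is_lpoly_diff: "is_lpoly p \<Longrightarrow> is_lpoly q \<Longrightarrow> is_lpoly (\<lambda>k. p k - q k)"
  unfolding is_lpoly_def lsupp_def
  by (rule finite_subset[of _ "{k. p k \<noteq> 0} \<union> {k. q k \<noteq> 0}"]) auto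

lemma is_lpoly_sum:
  "finite I \<Longrightarrow> (\<And>i. i \<in> I \<Longrightarrow> is_lpoly (f i)) \<Longrightarrow> is_lpoly (\<lambda>k. \<Sum>i\<in>I. f i k)"
proof (induction I rule: finite_induct)
  case empty
  then show ?case by (simp add: is_lpoly_def lsupp_def)
next
  case (insert x I)
  then show ?case using is_lpoly_add[of "f x" "\<lambda>k. \<Sum>i\<in>I. f i k"] by simp
qed

lemma leval_add:
  assumes "is_lpoly p" "is_lpoly q"
  shows "leval (\<lambda>k. p k + q k) z = leval p z + leval q z"
proof -
  let ?A = "lsupp p \<union> lsupp q"
  have A: "finite ?A" using assms by (simp add: is_lpoly_def)
  have "leval (\<lambda>k. p k + q k) z = (\<Sum>k\<in>?A. (p k + q k) * z powi k)"
    by (rule leval_eq_sum_superset[OF A]) (auto simp: lsupp_def)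
  also have "\<dots> = (\<Sum>k\<in>?A. p k * z powi k) + (\<Sum>k\<in>?A. q k * z powi k)"
    by (simp add: distrib_right sum.distrib)
  also have "\<dots> = leval p z + leval q z"
    by (simp add: leval_eq_sum_superset[OF A])
  finally show ?thesis .
qed

lemma leval_diff:
  assumes "is_lpoly p" "is_lpoly q"
  shows "leval (\<lambda>k. p k - q k) z = leval p z - leval q z"
proof -
  let ?A = "lsupp p \<union> lsupp q"
  have A: "finite ?A" using assms by (simp add: is_lpoly_def)
  have "leval (\<lambda>k. p k - q k) z = (\<Sum>k\<in>?A. (p k - q k) * z powi k)"
    by (rule leval_eq_sum_superset[OF A]) (auto simp: lsupp_def)
  also have "\<dots> = (\<Sum>k\<in>?A. p k * z powi k) - (\<Sum>k\<in>?A. q k * z powi k)"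
    by (simp add: left_diff_distrib sum_subtractf)
  also have "\<dots> = leval p z - leval q z"
    by (simp add: leval_eq_sum_superset[OF A])
  finally show ?thesis .
qed

lemma leval_sum:
  "finite I \<Longrightarrow> (\<And>i. i \<in> I \<Longrightarrow> is_lpoly (f i)) \<Longrightarrow>
    leval (\<lambda>k. \<Sum>i\<in>I. f i k) z = (\<Sum>i\<in>I. leval (f i) z)"
proof (induction I rule: finite_induct)
  case empty
  then show ?case by (simp add: leval_def lsupp_def)
next
  case (insert x I)
  then show ?case
    using leval_add[of "f x" "\<lambda>k. \<Sum>i\<in>I. f i k"] is_lpoly_sum[of I f] by simp
qed

lemma leval_ltilde:
  assumes "z \<noteq> 0"
  shows "leval (ltilde p) z = cnj (leval p (inverse (cnj z)))"
proof -
  have "leval (ltilde p) z = (\<Sum>k\<in>uminus ` lsupp p. cnj (p (- k)) * z powi k)"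
    unfolding leval_def lsupp_ltilde by (simp add: ltilde_def)
  also have "\<dots> = (\<Sum>k\<in>lsupp p. cnj (p k) * z powi (- k))"
    by (subst sum.reindex) (auto simp: inj_on_def)
  also have "\<dots> = cnj (leval p (inverse (cnj z)))"
    by (simp add: leval_def power_int_minus power_int_inverse)
  finally show ?thesis .
qed

lemma leval_lmult:
  assumes p: "is_lpoly p" and q: "is_lpoly q" and z: "z \<noteq> 0"
  shows "leval (lmult p q) z = leval p z * leval q z"
proof -
  define C where "C = (\<lambda>(a, b). a + b) ` (lsupp p \<times> lsupp q)"
  have "finite (lsupp p)" "finite (lsupp q)" using p q by (auto simp: is_lpoly_def)
  then have C: "finite C" by (simp add: C_def)
  have shift: "(\<Sum>n\<in>C. q (n - k) * z powi (n - k)) = leval q z" if k: "k \<in> lsupp p" for k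
  proof -
    have "lsupp q \<subseteq> (\<lambda>n. n - k) ` C"
    proof
      fix j assume "j \<in> lsupp q"
      then have "k + j \<in> C" using k by (force simp: C_def)
      then show "j \<in> (\<lambda>n. n - k) ` C" by (intro image_eqI[where x="k + j"]) auto
    qed
    then have "leval q z = (\<Sum>j\<in>(\<lambda>n. n - k) ` C. q j * z powi j)"
      using C by (intro leval_eq_sum_superset) auto
    also have "\<dots> = (\<Sum>n\<in>C. q (n - k) * z powi (n - k))"
      by (subst sum.reindex) (auto simp: inj_on_def)
    finally show ?thesis by simp
  qed
  have "leval (lmult p q) z = (\<Sum>n\<in>C. lmult p q n * z powi n)"
    using C lsupp_lmult_subset by (intro leval_eq_sum_superset) (auto simp: C_def)
  also have "\<dots> = (\<Sum>k\<in>lsupp p. \<Sum>n\<in>C. p k * q (n - k) * z powi n)"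
    by (simp add: lmult_def sum_distrib_right sum.swap[of _ C])
  also have "\<dots> = (\<Sum>k\<in>lsupp p. p k * z powi k * (\<Sum>n\<in>C. q (n - k) * z powi (n - k)))"
    by (simp add: sum_distrib_left z power_int_diff field_simps)
  also have "\<dots> = leval p z * leval q z"
    by (simp add: shift leval_def sum_distrib_right)
  finally show ?thesis .
qed

lemma is_lpoly_supp_bounded:
  assumes "is_lpoly p"
  obtains R :: nat where "lsupp p \<subseteq> {- int R..int R}"
proof -
  have "finite (abs ` lsupp p)" using assms by (simp add: is_lpoly_def)
  then obtain M where "\<forall>x\<in>abs ` lsupp p. x \<le> M"
    by (meson bdd_above_def bdd_above_finite)
  then have "lsupp p \<subseteq> {- int (nat M)..int (nat M)}" by force
  then show ?thesis using that by blast
qed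

lemma leval_mult_power_eq_polyfun:
  assumes R: "lsupp p \<subseteq> {- int R..int R}" and z: "z \<noteq> 0"
  shows "leval p z * z ^ R = (\<Sum>j\<le>2 * R. p (int j - int R) * z ^ j)"
proof -
  have range: "{- int R..int R} = (\<lambda>j. int j - int R) ` {..2 * R}"
  proof
    show "{- int R..int R} \<subseteq> (\<lambda>j. int j - int R) ` {..2 * R}"
    proof
      fix k assume "k \<in> {- int R..int R}"
      then show "k \<in> (\<lambda>j. int j - int R) ` {..2 * R}"
        by (intro image_eqI[where x="nat (k + int R)"]) auto
    qed
  qed auto
  have "leval p z * z ^ R = (\<Sum>k\<in>{- int R..int R}. p k * z powi (k + int R))"
    by (simp add: leval_eq_sum_superset[OF _ R] sum_distrib_right z power_int_add mult.assoc)
  also have "\<dots> = (\<Sum>j\<le>2 * R. p (int j - int R) * z ^ j)"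
    unfolding range by (subst sum.reindex) (auto simp: inj_on_def)
  finally show ?thesis .
qed

lemma lpoly_eq_0_if_leval_eq_0:
  assumes p: "is_lpoly p" and zero: "\<And>z. z \<noteq> 0 \<Longrightarrow> leval p z = 0"
  shows "p = (\<lambda>_. 0)"
proof
  fix k
  obtain R where R: "lsupp p \<subseteq> {- int R..int R}" using is_lpoly_supp_bounded[OF p] .
  have "- {0} \<subseteq> {z. (\<Sum>j\<le>2 * R. p (int j - int R) * z ^ j) = 0}"
    using leval_mult_power_eq_polyfun[OF R] zero by auto
  moreover have "infinite (- {0 :: complex})"
    by (simp add: infinite_UNIV_char_0 Compl_eq_Diff_UNIV)
  ultimately have "infinite {z. (\<Sum>j\<le>2 * R. p (int j - int R) * z ^ j) = 0}"
    using infinite_super by blast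
  then have coeffs: "\<forall>j\<le>2 * R. p (int j - int R) = 0"
    using polyfun_finite_roots[of "\<lambda>j. p (int j - int R)" "2 * R"] by auto
  show "p k = 0"
  proof (cases "k \<in> lsupp p")
    case True
    then have "k \<in> {- int R..int R}" using R by auto
    then have "nat (k + int R) \<le> 2 * R" "int (nat (k + int R)) - int R = k" by auto
    then show ?thesis using coeffs[rule_format, of "nat (k + int R)"] by simp
  qed (simp add: lsupp_def)
qed

lemma lpoly_eqI:
  assumes "is_lpoly p" "is_lpoly q" "\<And>z. z \<noteq> 0 \<Longrightarrow> leval p z = leval q z"
  shows "p = q"
proof -
  have "(\<lambda>k. p k - q k) = (\<lambda>_. 0)"
    using assms by (intro lpoly_eq_0_if_leval_eq_0) (simp_all add: is_lpoly_diff leval_diff)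
  then show ?thesis by (simp add: fun_eq_iff)
qed

lemma in_Pplus_lmult: "in_Pplus p \<Longrightarrow> in_Pplus q \<Longrightarrow> in_Pplus (lmult p q)"
  unfolding in_Pplus_def lmult_def
proof (intro allI impI sum.neutral ballI)
  fix n k :: int
  assume p: "\<forall>k<0. p k = 0" and q: "\<forall>k<0. q k = 0" and "n < 0" "k \<in> lsupp p"
  then have "\<not> k < 0" by (auto simp: lsupp_def)
  with q \<open>n < 0\<close> show "p k * q (n - k) = 0" by simp
qed

lemma leval_eq_coeff_0_if_ltilde_in_Pplus:
  assumes "in_Pplus p" "in_Pplus (ltilde p)"
  shows "leval p z = p 0"
proof -
  have "p k = 0" if "k \<noteq> 0" for k
  proof (cases "k < 0")
    case True
    then show ?thesis using assms(1) by (simp add: in_Pplus_def)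
  next
    case False
    then have "ltilde p (- k) = 0" using assms(2) that by (simp add: in_Pplus_def)
    then show ?thesis by (simp add: ltilde_def)
  qed
  then have "lsupp p \<subseteq> {0}" by (auto simp: lsupp_def)
  then show ?thesis by (simp add: leval_eq_sum_superset[of "{0}"])
qed

definition Pplus_fun :: "(complex \<Rightarrow> complex) \<Rightarrow> bool" where
  "Pplus_fun f \<longleftrightarrow> (\<exists>a. is_lpoly a \<and> in_Pplus a \<and> (\<forall>z. z \<noteq> 0 \<longrightarrow> f z = leval a z))"

lemma Pplus_funI:
  "is_lpoly a \<Longrightarrow> in_Pplus a \<Longrightarrow> (\<And>z. z \<noteq> 0 \<Longrightarrow> leval a z = f z) \<Longrightarrow> Pplus_fun f"
  unfolding Pplus_fun_def by auto

lemma Pplus_fun_cong: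
  "Pplus_fun f \<Longrightarrow> (\<And>z. z \<noteq> 0 \<Longrightarrow> f z = g z) \<Longrightarrow> Pplus_fun g"
  unfolding Pplus_fun_def by auto

lemma Pplus_fun_add:
  assumes "Pplus_fun f" "Pplus_fun g"
  shows "Pplus_fun (\<lambda>z. f z + g z)"
proof -
  obtain a b where "is_lpoly a" "in_Pplus a" "\<And>z. z \<noteq> 0 \<Longrightarrow> f z = leval a z"
    "is_lpoly b" "in_Pplus b" "\<And>z. z \<noteq> 0 \<Longrightarrow> g z = leval b z"
    using assms by (auto simp: Pplus_fun_def)
  then show ?thesis
    by (intro Pplus_funI[of "\<lambda>k. a k + b k"]) (simp_all add: is_lpoly_add leval_add in_Pplus_def)
qed

lemma Pplus_fun_diff:
  assumes "Pplus_fun f" "Pplus_fun g"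
  shows "Pplus_fun (\<lambda>z. f z - g z)"
proof -
  obtain a b where "is_lpoly a" "in_Pplus a" "\<And>z. z \<noteq> 0 \<Longrightarrow> f z = leval a z"
    "is_lpoly b" "in_Pplus b" "\<And>z. z \<noteq> 0 \<Longrightarrow> g z = leval b z"
    using assms by (auto simp: Pplus_fun_def)
  then show ?thesis
    by (intro Pplus_funI[of "\<lambda>k. a k - b k"]) (simp_all add: is_lpoly_diff leval_diff in_Pplus_def)
qed

lemma Pplus_fun_mult:
  assumes "Pplus_fun f" "Pplus_fun g"
  shows "Pplus_fun (\<lambda>z. f z * g z)"
proof -
  obtain a b where "is_lpoly a" "in_Pplus a" "\<And>z. z \<noteq> 0 \<Longrightarrow> f z = leval a z"
    "is_lpoly b" "in_Pplus b" "\<And>z. z \<noteq> 0 \<Longrightarrow> g z = leval b z"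
    using assms by (auto simp: Pplus_fun_def)
  then show ?thesis
    by (intro Pplus_funI[of "lmult a b"]) (simp_all add: is_lpoly_lmult leval_lmult in_Pplus_lmult)
qed

lemma Pplus_fun_sum:
  "finite I \<Longrightarrow> (\<And>i. i \<in> I \<Longrightarrow> Pplus_fun (f i)) \<Longrightarrow> Pplus_fun (\<lambda>z. \<Sum>i\<in>I. f i z)"
proof (induction I rule: finite_induct)
  case empty
  show ?case
    by (rule Pplus_funI[of "\<lambda>_. 0"]) (simp_all add: is_lpoly_def in_Pplus_def leval_def lsupp_def)
next
  case (insert x I)
  then show ?case using Pplus_fun_add[of "f x" "\<lambda>z. \<Sum>i\<in>I. f i z"] by simp
qed

text \<open>If \<open>f\<close> evaluates \<open>p\<close>, the second hypothesis says that \<open>\<tilde>p\<close> has no negative powers.\<close>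
lemma Pplus_fun_reflected_imp_constant:
  assumes f: "Pplus_fun f" and g: "Pplus_fun (\<lambda>z. cnj (f (inverse (cnj z))))"
  shows "\<exists>c. \<forall>z. z \<noteq> 0 \<longrightarrow> f z = c"
proof -
  obtain a where a: "is_lpoly a" "in_Pplus a" and fa: "\<And>z. z \<noteq> 0 \<Longrightarrow> f z = leval a z"
    using f by (auto simp: Pplus_fun_def)
  obtain b where b: "is_lpoly b" "in_Pplus b"
    and gb: "\<And>z. z \<noteq> 0 \<Longrightarrow> cnj (f (inverse (cnj z))) = leval b z"
    using g by (auto simp: Pplus_fun_def)
  have "leval (ltilde b) z = leval a z" if "z \<noteq> 0" for z
    using that by (simp add: leval_ltilde fa[symmetric] gb[symmetric])
  then have "ltilde b = a" using a b by (intro lpoly_eqI is_lpoly_ltilde)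
  then have "in_Pplus (ltilde a)" using b by auto
  then show ?thesis using fa leval_eq_coeff_0_if_ltilde_in_Pplus[OF \<open>in_Pplus a\<close>] by metis
qed

lemma PplusN_imp_lpoly: "p \<in> PplusN F N \<Longrightarrow> is_lpoly p \<and> in_Pplus p"
proof -
  assume "p \<in> PplusN F N"
  then have "{k. p k \<noteq> 0} \<subseteq> {0..int N}" "\<forall>k<0. p k = 0"
    unfolding PplusN_def by force+
  then show ?thesis unfolding is_lpoly_def in_Pplus_def lsupp_def
    using finite_subset by blast
qed

lemma PminusN_imp_lpoly: "p \<in> PminusN F N \<Longrightarrow> is_lpoly p"
proof -
  assume "p \<in> PminusN F N"
  then have "k \<in> {- int N..0}" if "p k \<noteq> 0" for k
    using that unfolding PminusN_def by (cases "0 \<le> k"; cases "k < - int N") auto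
  then have "{k. p k \<noteq> 0} \<subseteq> {- int N..0}" by blast
  then show ?thesis unfolding is_lpoly_def lsupp_def
    using finite_subset by blast
qed

lemma solution_component_lpoly:
  assumes "is_solution_S F N m \<zeta> u" "i \<in> {1..m}"
  shows "is_lpoly (u i)" "in_Pplus (u i)"
proof -
  have "u i \<in> PplusN F N" using assms by (simp add: is_solution_S_def)
  then show "is_lpoly (u i)" "in_Pplus (u i)" by (simp_all add: PplusN_imp_lpoly)
qed

lemma solution_Pplus_fun_first_eqs:
  assumes u: "is_solution_S F N m \<zeta> u" and \<zeta>: "\<forall>i\<in>{1..m-1}. is_lpoly (\<zeta> i)"
    and i: "i \<in> {1..m-1}"
  shows "Pplus_fun (\<lambda>z. leval (\<zeta> i) z * leval (u m) z - leval (ltilde (u i)) z)"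
proof (rule Pplus_funI)
  have lp: "is_lpoly (\<zeta> i)" "is_lpoly (u m)" "is_lpoly (u i)"
    using \<zeta> i solution_component_lpoly[OF u] by auto
  then show "is_lpoly (\<lambda>k. lmult (\<zeta> i) (u m) k - ltilde (u i) k)"
    by (simp add: is_lpoly_diff is_lpoly_lmult is_lpoly_ltilde)
  from lp show "leval (\<lambda>k. lmult (\<zeta> i) (u m) k - ltilde (u i) k) z
      = leval (\<zeta> i) z * leval (u m) z - leval (ltilde (u i)) z" if "z \<noteq> 0" for z
    using that by (simp add: is_lpoly_lmult is_lpoly_ltilde leval_diff leval_lmult)
  show "in_Pplus (\<lambda>k. lmult (\<zeta> i) (u m) k - ltilde (u i) k)"
    using u i by (simp add: is_solution_S_def)
qed

lemma solution_Pplus_fun_last_eq: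
  assumes u: "is_solution_S F N m \<zeta> u" and \<zeta>: "\<forall>i\<in>{1..m-1}. is_lpoly (\<zeta> i)"
    and m: "m \<ge> 1"
  shows "Pplus_fun (\<lambda>z. (\<Sum>i=1..m-1. leval (\<zeta> i) z * leval (u i) z) + leval (ltilde (u m)) z)"
proof (rule Pplus_funI)
  have lp: "is_lpoly (\<zeta> i)" "is_lpoly (u i)" if "i \<in> {1..m-1}" for i
    using \<zeta> that solution_component_lpoly[OF u, of i] by auto
  have um: "is_lpoly (ltilde (u m))"
    using m solution_component_lpoly[OF u, of m] by (simp add: is_lpoly_ltilde)
  have sum: "is_lpoly (\<lambda>k. \<Sum>i=1..m-1. lmult (\<zeta> i) (u i) k)"
    using lp by (intro is_lpoly_sum is_lpoly_lmult) auto
  then show "is_lpoly (\<lambda>k. (\<Sum>i=1..m-1. lmult (\<zeta> i) (u i) k) + ltilde (u m) k)"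
    using um by (rule is_lpoly_add)
  fix z :: complex assume z: "z \<noteq> 0"
  have "leval (\<lambda>k. (\<Sum>i=1..m-1. lmult (\<zeta> i) (u i) k) + ltilde (u m) k) z
      = (\<Sum>i=1..m-1. leval (lmult (\<zeta> i) (u i)) z) + leval (ltilde (u m)) z"
    unfolding leval_add[OF sum um] using lp by (subst leval_sum) (auto intro: is_lpoly_lmult)
  also have "\<dots> = (\<Sum>i=1..m-1. leval (\<zeta> i) z * leval (u i) z) + leval (ltilde (u m)) z"
    using lp z by (simp add: leval_lmult)
  finally show "leval (\<lambda>k. (\<Sum>i=1..m-1. lmult (\<zeta> i) (u i) k) + ltilde (u m) k) z
      = (\<Sum>i=1..m-1. leval (\<zeta> i) z * leval (u i) z) + leval (ltilde (u m)) z" .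
next
  show "in_Pplus (\<lambda>k. (\<Sum>i=1..m-1. lmult (\<zeta> i) (u i) k) + ltilde (u m) k)"
    using u by (simp add: is_solution_S_def)
qed

definition solution_pairing :: "nat \<Rightarrow> (nat \<Rightarrow> lpoly) \<Rightarrow> (nat \<Rightarrow> lpoly) \<Rightarrow> complex \<Rightarrow> complex" where
  "solution_pairing m u v z =
    (\<Sum>i=1..m-1. leval (u i) z * leval (ltilde (v i)) z) + leval (ltilde (u m)) z * leval (v m) z"

lemma solution_pairing_swap:
  assumes "z \<noteq> 0"
  shows "cnj (solution_pairing m v u (inverse (cnj z))) = solution_pairing m u v z"
  using leval_ltilde[OF assms] leval_ltilde[OF assms, of "ltilde _"]
  by (simp add: solution_pairing_def mult.commute)

lemma solution_pairing_Pplus_fun: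
  assumes \<zeta>: "\<forall>i\<in>{1..m-1}. is_lpoly (\<zeta> i)" and m: "m \<ge> 1"
    and u: "is_solution_S F N m \<zeta> u" and v: "is_solution_S F N m \<zeta> v"
  shows "Pplus_fun (solution_pairing m u v)"
proof -
  let ?Q = "\<lambda>z. (\<Sum>i=1..m-1. leval (\<zeta> i) z * leval (u i) z) + leval (ltilde (u m)) z"
  let ?P = "\<lambda>i z. leval (\<zeta> i) z * leval (v m) z - leval (ltilde (v i)) z"
  have pairing: "solution_pairing m u v
      = (\<lambda>z. ?Q z * leval (v m) z - (\<Sum>i=1..m-1. leval (u i) z * ?P i z))"
    by (simp add: fun_eq_iff solution_pairing_def algebra_simps sum_subtractf
        sum_distrib_left sum_distrib_right)
  have Q: "Pplus_fun ?Q" by (rule solution_Pplus_fun_last_eq[OF u \<zeta> m])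
  have P: "Pplus_fun (?P i)" if "i \<in> {1..m-1}" for i
    by (rule solution_Pplus_fun_first_eqs[OF v \<zeta> that])
  have component: "Pplus_fun (leval (w i))"
    if "is_solution_S F N m \<zeta> w" "i \<in> {1..m}" for w i
    using solution_component_lpoly[OF that] by (auto intro: Pplus_funI)
  have "Pplus_fun (\<lambda>z. ?Q z * leval (v m) z)"
    using Q component[OF v] m by (intro Pplus_fun_mult) auto
  moreover have "Pplus_fun (\<lambda>z. \<Sum>i=1..m-1. leval (u i) z * ?P i z)"
    using P component[OF u] by (intro Pplus_fun_sum Pplus_fun_mult) auto
  ultimately show ?thesis unfolding pairing by (rule Pplus_fun_diff)
qed

theorem lemma3:
  fixes F :: "complex set" and m N :: nat
    and \<zeta> u v :: "nat \<Rightarrow> lpoly"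
  assumes "conj_closed_subfield F"
    and "m \<ge> 2" and "N \<ge> 1"
    and "\<forall>i\<in>{1..m-1}. \<zeta> i \<in> PminusN F N"
    and "is_solution_S F N m \<zeta> u"
    and "is_solution_S F N m \<zeta> v"
  shows "\<exists>c. \<forall>z::complex. z \<noteq> 0 \<longrightarrow>
           (\<Sum>i=1..m-1. leval (u i) z * leval (ltilde (v i)) z)
             + leval (ltilde (u m)) z * leval (v m) z = c"
proof -
  have m: "m \<ge> 1" using assms(2) by simp
  have \<zeta>: "\<forall>i\<in>{1..m-1}. is_lpoly (\<zeta> i)" using assms(4) PminusN_imp_lpoly by blast
  have "Pplus_fun (solution_pairing m u v)"
    using solution_pairing_Pplus_fun[OF \<zeta> m assms(5,6)] .
  moreover have "Pplus_fun (\<lambda>z. cnj (solution_pairing m u v (inverse (cnj z))))"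
    using solution_pairing_Pplus_fun[OF \<zeta> m assms(6,5)]
    by (rule Pplus_fun_cong) (simp add: solution_pairing_swap)
  ultimately show ?thesis
    unfolding solution_pairing_def[symmetric] by (rule Pplus_fun_reflected_imp_constant)
qed

end
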